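(* Let $f$ be a nonconstant harmonic function on $K$. Among all junction points $x$ lying on the contour $[p_0,p_1]\cup[p_0,p_2]\cup[p_1,p_2]$ of $G_0$, there is at most one at which the normal derivative of $f$ (with respect to some cell having $x$ as a vertex) vanishes. Moreover, such an exceptional point exists and is a vertex of $G_0$ if and only if the restrictions of $f$ to all three edges of $G_0$ are monotone.
   Context: Let $p_0,p_1,p_2$ be the vertices of a unit equilateral triangle in $\mathbb{R}^2$, $F_i(x)=(x+p_i)/2$, and $K$ the Sierpinski gasket (the attractor of $F_0,F_1,F_2$). For a word $w$ of length $m$, $F_w=F_{w_1}\circ\cdots\circ F_{w_m}$ and $C_w=F_w(K)$ is a cell of level $m$ with vertices $F_w(p_0),F_w(p_1),F_w(p_2)$; the minimal triangles of $G_m$ are the triangles with these vertices. Junction points are the points of $\bigcup_m\bigcup_{|w|=m}\{F_w(p_0),F_w(p_1),F_w(p_2)\}$. A continuous $f:K\to\mathbb{R}$ is harmonic if for every $m\ge0$ and every minimal triangle of $G_m$ with vertices $v_i,v_j,v_k$, the value at the midpoint $v_{ij}$ of $[v_i,v_j]$ is $\frac15(2f(v_i)+2f(v_j)+f(v_k))$. For a harmonic $f$, a junction point $x=F_w(p_i)$ and the cell $C_w$ (with other vertices $y=F_w(p_j)$, $z=F_w(p_k)$), the normal derivative of $f$ at $x$ with respect to $C_w$ is $\partial_n f(x)=(5/3)^{|w|}\big(2f(x)-f(y)-f(z)\big)$ (this value does not change if $C_w$ is replaced by a smaller cell $C_{wi\cdots i}$ having $x$ as a vertex). Monotonicity of restrictions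 to edges refers to a linear parametrization of each edge. *)

theory Defs
  imports "HOL-Analysis.Analysis"
begin

text \<open>Vertices are given by p :: nat \<Rightarrow> complex (only p 0, p 1, p 2 matter).
  Words are lists over {0,1,2}.\<close>

definition sg_F :: "(nat \<Rightarrow> complex) \<Rightarrow> nat \<Rightarrow> complex \<Rightarrow> complex" where
  "sg_F p i x = (x + p i) / 2"

fun sg_Fw :: "(nat \<Rightarrow> complex) \<Rightarrow> nat list \<Rightarrow> complex \<Rightarrow> complex" where
  "sg_Fw p [] = id"
| "sg_Fw p (i # w) = sg_F p i \<circ> sg_Fw p w"

definition sg_word :: "nat list \<Rightarrow> bool" where
  "sg_word w \<longleftrightarrow> set w \<subseteq> {..<3}"

definition sg_junctions :: "(nat \<Rightarrow> complex) \<Rightarrow> complex set" where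
  "sg_junctions p = {sg_Fw p w (p i) | w i. sg_word w \<and> i < 3}"

text \<open>The Sierpinski gasket: the attractor of F_0,F_1,F_2, which is the closure of V_*.\<close>
definition sg_K :: "(nat \<Rightarrow> complex) \<Rightarrow> complex set" where
  "sg_K p = closure (sg_junctions p)"

definition sg_harmonic :: "(nat \<Rightarrow> complex) \<Rightarrow> (complex \<Rightarrow> real) \<Rightarrow> bool" where
  "sg_harmonic p f \<longleftrightarrow> continuous_on (sg_K p) f \<and>
     (\<forall>w i j k. sg_word w \<and> {i, j, k} = {0, 1, 2} \<longrightarrow>
        f (midpoint (sg_Fw p w (p i)) (sg_Fw p w (p j))) =
          (2 * f (sg_Fw p w (p i)) + 2 * f (sg_Fw p w (p j)) + f (sg_Fw p w (p k))) / 5)"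

definition sg_normal_deriv :: "(nat \<Rightarrow> complex) \<Rightarrow> (complex \<Rightarrow> real) \<Rightarrow> nat list \<Rightarrow> nat \<Rightarrow> real" where
  "sg_normal_deriv p f w i =
     (5/3) ^ length w * (2 * f (sg_Fw p w (p i)) -
        (\<Sum>l\<in>{0, 1, 2} - {i}. f (sg_Fw p w (p l))))"

definition sg_contour :: "(nat \<Rightarrow> complex) \<Rightarrow> complex set" where
  "sg_contour p = closed_segment (p 0) (p 1) \<union> closed_segment (p 0) (p 2) \<union> closed_segment (p 1) (p 2)"

definition sg_zero_nd_points :: "(nat \<Rightarrow> complex) \<Rightarrow> (complex \<Rightarrow> real) \<Rightarrow> complex set" where
  "sg_zero_nd_points p f = {x \<in> sg_junctions p \<inter> sg_contour p.
     \<exists>w i. sg_word w \<and> i < 3 \<and> sg_Fw p w (p i) = x \<and> sg_normal_deriv p f w i = 0}"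

definition sg_edge_monotone :: "(nat \<Rightarrow> complex) \<Rightarrow> (complex \<Rightarrow> real) \<Rightarrow> nat \<Rightarrow> nat \<Rightarrow> bool" where
  "sg_edge_monotone p f i j \<longleftrightarrow>
     (let g = (\<lambda>t::real. f (p i + of_real t * (p j - p i))) in
       monotone_on {0..1} (\<le>) (\<le>) g \<or> monotone_on {0..1} (\<le>) (\<ge>) g)"

end

theory Submission
  imports Defs
begin

(* Let d_0, d_1, d_2 be the normal derivatives of f at the vertices of G_0 (with respect to K).
   They sum to zero, and no two of them vanish unless f is constant.  On an edge [p_i, p_j],
   passing from a cell C_w to C_wi keeps the normal derivative a at p_i and replaces the one
   at p_j by (b - a)/3; passing to C_wj acts symmetrically.  Moreover
   f(F_w p_j) - f(F_w p_i) = (3/5)^|w| (b - a)/3.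
   If d_i d_j <= 0, the pair (a, b) keeps opposite signs in every cell of the edge: all these
   increments have one sign, so f is monotone on the edge, and no interior junction point of
   the edge is a zero.  If d_i d_j > 0, f moves in opposite directions near the two ends of the
   edge; an interior zero is F_v of the midpoint of the edge for a word v with a = b in C_v,
   and such a word is unique.  As d_0 + d_1 + d_2 = 0, at most one edge has d_i d_j > 0, and
   a zero at a vertex, d_m = 0, forces d_i d_j <= 0 on every edge. *)

lemma perm012_distinct:
  assumes "{i, j, k} = {0, 1, 2::nat}"
  shows "i \<noteq> j \<and> j \<noteq> k \<and> i \<noteq> k \<and> i < 3 \<and> j < 3 \<and> k < 3"
proof -
  have "distinct [i, j, k]"
    using assms by (intro card_distinct) simp
  moreover have "i \<in> {0, 1, 2}" "j \<in> {0, 1, 2}" "k \<in> {0, 1, 2}"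
    using assms by blast+
  ultimately show ?thesis by auto
qed

lemma perm012_third:
  assumes "m < 3" "l < 3" "m \<noteq> l"
  shows "{m, l, 3 - m - l} = {0, 1, 2::nat}"
proof -
  have "m = 0 \<or> m = 1 \<or> m = 2" "l = 0 \<or> l = 1 \<or> l = 2" using assms(1,2) by auto
  then show ?thesis using assms(3) by (elim disjE) auto
qed

lemma perm012_exists:
  assumes "m < 3"
  obtains j k where "{m, j, k} = {0, 1, 2::nat}"
proof
  show "{m, if m = 0 then 1 else 0, 3 - m - (if m = 0 then 1 else 0)} = {0, 1, 2::nat}"
    using assms by (intro perm012_third) auto
qed

lemma replicate_or_last_other:
  "(\<exists>n. w = replicate n l) \<or> (\<exists>v m n. m \<noteq> l \<and> w = v @ [m] @ replicate n l)"
proof (induction w rule: rev_induct)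
  case Nil
  then show ?case by (metis replicate_0)
next
  case (snoc x w)
  show ?case
  proof (cases "x = l")
    case True
    from snoc.IH show ?thesis
    proof (elim disjE exE conjE)
      fix n
      assume "w = replicate n l"
      then have "w @ [x] = replicate (Suc n) l" using True by (simp add: replicate_append_same)
      then show ?thesis by blast
    next
      fix v m n
      assume "m \<noteq> l" "w = v @ [m] @ replicate n l"
      then have "m \<noteq> l \<and> w @ [x] = v @ [m] @ replicate (Suc n) l"
        using True by (simp add: replicate_append_same)
      then show ?thesis by blast
    qed
  next
    case False
    then have "x \<noteq> l \<and> w @ [x] = w @ [x] @ replicate 0 l" by simp
    then show ?thesis by blast
  qed
qed

lemma sum3_zero_pos_product:
  fixes a b c :: real
  assumes "a + b + c = 0" "a * b > 0"
  shows "a * c < 0 \<and> b * c < 0"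
proof -
  have c: "c = - a - b" using assms(1) by linarith
  have "a * c = - (a * a) - a * b" "b * c = - (b * b) - a * b"
    unfolding c by (simp_all add: algebra_simps)
  then show ?thesis using assms(2) zero_le_square[of a] zero_le_square[of b] by linarith
qed

lemma sum3_zero_some_zero_iff:
  fixes a b c :: real
  assumes "a + b + c = 0"
  shows "(a = 0 \<or> b = 0 \<or> c = 0) \<longleftrightarrow> a * b \<le> 0 \<and> a * c \<le> 0 \<and> b * c \<le> 0"
proof
  assume "a = 0 \<or> b = 0 \<or> c = 0"
  then show "a * b \<le> 0 \<and> a * c \<le> 0 \<and> b * c \<le> 0"
    using assms by (elim disjE) (auto simp: add_eq_0_iff2 mult_le_0_iff)
next
  assume "a * b \<le> 0 \<and> a * c \<le> 0 \<and> b * c \<le> 0"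
  moreover have "a * b > 0 \<or> a * c > 0 \<or> b * c > 0" if "a \<noteq> 0" "b \<noteq> 0" "c \<noteq> 0"
    using that by (auto simp: zero_less_mult_iff)
  ultimately show "a = 0 \<or> b = 0 \<or> c = 0" by fastforce
qed

lemma equilateral_not_collinear:
  fixes a b c :: "'a::euclidean_space"
  assumes "dist a b = r" "dist a c = r" "dist b c = r" "r > 0"
  shows "\<not> collinear {a, b, c}"
  using assms unfolding collinear_between_cases between by (simp add: dist_commute)

section \<open>Cells and barycentric coordinates\<close>

lemma sg_Fw_append: "sg_Fw p (w @ v) = sg_Fw p w \<circ> sg_Fw p v"
  by (induction w) auto

lemma sg_Fw_snoc: "sg_Fw p (w @ [m]) z = sg_Fw p w (sg_F p m z)"
  by (simp add: sg_Fw_append)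

lemma sg_Fw_affine: "sg_Fw p w z = z / 2 ^ length w + sg_Fw p w 0"
proof (induction w arbitrary: z)
  case (Cons m w)
  show ?case
    using Cons[of z] Cons[of 0] by (simp add: sg_F_def field_simps)
qed simp

lemma sg_Fw_midpoint: "sg_Fw p w (midpoint a b) = midpoint (sg_Fw p w a) (sg_Fw p w b)"
  by (subst (1 2 3) sg_Fw_affine) (simp add: midpoint_def scaleR_conv_of_real field_simps)

lemma sg_F_fixpoint [simp]: "sg_F p m (p m) = p m"
  by (simp add: sg_F_def)

lemma sg_F_vertex: "sg_F p m (p l) = midpoint (p m) (p l)"
  by (simp add: sg_F_def midpoint_def scaleR_conv_of_real field_simps)

lemma sg_Fw_replicate: "sg_Fw p (replicate n i) z = p i + (z - p i) / 2 ^ n"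
proof (induction n)
  case (Suc n)
  have "sg_Fw p (replicate (Suc n) i) z = sg_F p i (p i + (z - p i) / 2 ^ n)"
    by (simp add: Suc.IH)
  then show ?case by (simp add: sg_F_def field_simps)
qed simp

lemma sg_Fw_replicate_fixpoint [simp]: "sg_Fw p (replicate n i) (p i) = p i"
  by (simp add: sg_Fw_replicate)

lemma sg_Fw_snoc_edge_lower:
  "sg_Fw p (w @ [i]) (p i + of_real (2 * s) * (p j - p i)) = sg_Fw p w (p i + of_real s * (p j - p i))"
proof -
  have "sg_F p i (p i + of_real (2 * s) * (p j - p i)) = p i + of_real s * (p j - p i)"
    by (simp add: sg_F_def field_simps)
  then show ?thesis by (simp add: sg_Fw_snoc)
qed

lemma sg_Fw_snoc_edge_upper:
  "sg_Fw p (w @ [j]) (p i + of_real (2 * s - 1) * (p j - p i)) = sg_Fw p w (p i + of_real s * (p j - p i))"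
proof -
  have "sg_F p j (p i + of_real (2 * s - 1) * (p j - p i)) = p i + of_real s * (p j - p i)"
    by (simp add: sg_F_def field_simps)
  then show ?thesis by (simp add: sg_Fw_snoc)
qed

lemma sg_Fw_vertex_in_junctions: "sg_word w \<Longrightarrow> l < 3 \<Longrightarrow> sg_Fw p w (p l) \<in> sg_junctions p"
  unfolding sg_junctions_def by blast

fun sg_bary :: "nat list \<Rightarrow> nat \<Rightarrow> nat \<Rightarrow> real" where
  "sg_bary [] l m = (if m = l then 1 else 0)"
| "sg_bary (c # w) l m = (sg_bary w l m + (if m = c then 1 else 0)) / 2"

lemma sg_Fw_barycentric:
  "sg_word w \<Longrightarrow> l < 3 \<Longrightarrow> sg_Fw p w (p l) = (\<Sum>m<3. sg_bary w l m *\<^sub>R p m)"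
proof (induction w)
  case Nil
  then show ?case by (auto simp: eval_nat_numeral less_Suc_eq)
next
  case (Cons c w)
  then have "c < 3" and IH: "sg_Fw p w (p l) = (\<Sum>m<3. sg_bary w l m *\<^sub>R p m)"
    by (auto simp: sg_word_def)
  then show ?case
    by (auto simp: sg_F_def eval_nat_numeral scaleR_conv_of_real field_simps less_Suc_eq)
qed

lemma sg_bary_sum: "sg_word w \<Longrightarrow> l < 3 \<Longrightarrow> (\<Sum>m<3. sg_bary w l m) = 1"
proof (induction w)
  case Nil
  then show ?case by (auto simp: eval_nat_numeral less_Suc_eq)
next
  case (Cons c w)
  then have "c < 3" and IH: "(\<Sum>m<3. sg_bary w l m) = 1"
    by (auto simp: sg_word_def)
  then show ?case
    by (auto simp: eval_nat_numeral field_simps less_Suc_eq)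
qed

lemma sg_bary_nonneg: "sg_bary w l m \<ge> 0"
  by (induction w) auto

lemma sg_bary_pos: "m \<in> set w \<or> m = l \<Longrightarrow> sg_bary w l m > 0"
  by (induction w) (auto simp: add_pos_nonneg add_nonneg_pos sg_bary_nonneg)

lemma sg_Fw_on_edge:
  assumes nc: "\<not> collinear {p 0, p 1, p 2}" and ijk: "{i, j, k} = {0, 1, 2}"
    and w: "sg_word w" "l < 3" and x: "sg_Fw p w (p l) \<in> closed_segment (p i) (p j)"
  shows "set w \<subseteq> {i, j} \<and> l \<in> {i, j}"
proof -
  define \<beta> where "\<beta> = sg_bary w l"
  have d: "i \<noteq> j" "j \<noteq> k" "i \<noteq> k" using perm012_distinct[OF ijk] by auto
  have ijk': "{..<3} = {i, j, k}"
    using ijk by (simp add: lessThan_nat_numeral lessThan_Suc insert_commute)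
  have sum3: "(\<Sum>m<3. g m) = g i + g j + g k" for g :: "nat \<Rightarrow> 'b::comm_monoid_add"
    using d unfolding ijk' by (simp add: add.assoc)
  obtain u where u: "sg_Fw p w (p l) = (1 - u) *\<^sub>R p i + u *\<^sub>R p j"
    using x unfolding closed_segment_def by blast
  \<comment> \<open>a positive weight at p k would make p k an affine combination of p i and p j\<close>
  have "\<beta> k = 0"
  proof (rule ccontr)
    assume "\<beta> k \<noteq> 0"
    then have pos: "\<beta> k > 0" using sg_bary_nonneg[of w l k] unfolding \<beta>_def by linarith
    define c where "c = (1 - u - \<beta> i) / \<beta> k"
    have "\<beta> i + \<beta> j + \<beta> k = 1" using sg_bary_sum[OF w] unfolding sum3 \<beta>_def .
    then have c': "1 - c = (u - \<beta> j) / \<beta> k" using pos unfolding c_def by (simp add: field_simps)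
    have "(1 - u) *\<^sub>R p i + u *\<^sub>R p j = \<beta> i *\<^sub>R p i + \<beta> j *\<^sub>R p j + \<beta> k *\<^sub>R p k"
      using sg_Fw_barycentric[OF w, of p] unfolding u sum3 \<beta>_def .
    then have "\<beta> k *\<^sub>R p k = (1 - u - \<beta> i) *\<^sub>R p i + (u - \<beta> j) *\<^sub>R p j"
      by (simp add: algebra_simps)
    then have "p k = inverse (\<beta> k) *\<^sub>R ((1 - u - \<beta> i) *\<^sub>R p i + (u - \<beta> j) *\<^sub>R p j)"
      using pos by (metis scaleR_scaleR left_inverse scaleR_one less_irrefl)
    then have "p k = c *\<^sub>R p i + (1 - c) *\<^sub>R p j"
      by (simp only: c') (simp add: c_def scaleR_add_right divide_inverse_commute)
    then have "collinear {p i, p k, p j}" unfolding collinear_3_expand by blast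
    moreover have "{p i, p k, p j} = p ` {i, j, k}" by auto
    ultimately have "collinear (p ` {0, 1, 2})" using ijk by simp
    then show False using nc by simp
  qed
  then have "k \<notin> set w" "l \<noteq> k" using sg_bary_pos[of k w l] unfolding \<beta>_def by auto
  moreover have "set w \<subseteq> {i, j, k}" "l \<in> {i, j, k}"
    using w unfolding sg_word_def ijk'[symmetric] by auto
  ultimately show ?thesis by blast
qed

lemma sg_Fw_eq_vertex:
  assumes nc: "\<not> collinear {p 0, p 1, p 2}" and w: "sg_word w" "l < 3"
    and m: "m < 3" and x: "sg_Fw p w (p l) = p m"
  shows "set w \<subseteq> {m} \<and> l = m"
proof -
  obtain j k where mjk: "{m, j, k} = {0, 1, 2::nat}"
    using m by (rule perm012_exists)
  have mkj: "{m, k, j} = {0, 1, 2::nat}" using mjk by (simp add: insert_commute)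
  have "set w \<subseteq> {m, j} \<and> l \<in> {m, j}" using sg_Fw_on_edge[OF nc mjk w] x by simp
  moreover have "set w \<subseteq> {m, k} \<and> l \<in> {m, k}" using sg_Fw_on_edge[OF nc mkj w] x by simp
  moreover have "j \<noteq> k" using perm012_distinct[OF mjk] by simp
  ultimately show ?thesis by blast
qed

section \<open>Normal derivatives of harmonic functions\<close>

lemma sg_harmonic_midpoint_rule:
  assumes "sg_harmonic p f" "sg_word w" "{i, j, k} = {0, 1, 2}"
  shows "f (sg_Fw p (w @ [i]) (p j)) =
     (2 * f (sg_Fw p w (p i)) + 2 * f (sg_Fw p w (p j)) + f (sg_Fw p w (p k))) / 5"
proof -
  have "sg_Fw p (w @ [i]) (p j) = midpoint (sg_Fw p w (p i)) (sg_Fw p w (p j))"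
    by (simp add: sg_Fw_snoc sg_F_vertex sg_Fw_midpoint)
  moreover have "f (midpoint (sg_Fw p w (p i)) (sg_Fw p w (p j))) =
      (2 * f (sg_Fw p w (p i)) + 2 * f (sg_Fw p w (p j)) + f (sg_Fw p w (p k))) / 5"
    using assms unfolding sg_harmonic_def by blast
  ultimately show ?thesis by simp
qed

lemma sg_normal_deriv_perm:
  assumes "{i, j, k} = {0, 1, 2::nat}"
  shows "sg_normal_deriv p f w i =
    (5/3) ^ length w * (2 * f (sg_Fw p w (p i)) - f (sg_Fw p w (p j)) - f (sg_Fw p w (p k)))"
proof -
  have d: "i \<noteq> j" "i \<noteq> k" "j \<noteq> k" using perm012_distinct[OF assms] by auto
  have "{0, 1, 2} - {i} = {j, k}"
    unfolding assms[symmetric] using d by auto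
  then show ?thesis using d unfolding sg_normal_deriv_def by (simp add: algebra_simps)
qed

lemma sg_normal_deriv_snoc_same:
  assumes h: "sg_harmonic p f" and w: "sg_word w" and ijk: "{i, j, k} = {0, 1, 2}"
  shows "sg_normal_deriv p f (w @ [i]) i = sg_normal_deriv p f w i"
proof -
  have ikj: "{i, k, j} = {0, 1, 2::nat}" using ijk by (simp add: insert_commute)
  show ?thesis
    unfolding sg_normal_deriv_perm[OF ijk]
      sg_harmonic_midpoint_rule[OF h w ijk] sg_harmonic_midpoint_rule[OF h w ikj]
    by (simp add: sg_Fw_snoc field_simps)
qed

lemma sg_normal_deriv_snoc_other:
  assumes h: "sg_harmonic p f" and w: "sg_word w" and ijk: "{i, j, k} = {0, 1, 2}"
  shows "sg_normal_deriv p f (w @ [i]) j = (sg_normal_deriv p f w j - sg_normal_deriv p f w i) / 3"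
proof -
  have ikj: "{i, k, j} = {0, 1, 2::nat}" and jik: "{j, i, k} = {0, 1, 2::nat}"
    using ijk by (simp_all add: insert_commute)
  show ?thesis
    unfolding sg_normal_deriv_perm[OF ijk] sg_normal_deriv_perm[OF jik]
      sg_harmonic_midpoint_rule[OF h w ijk] sg_harmonic_midpoint_rule[OF h w ikj]
    by (simp add: sg_Fw_snoc field_simps)
qed

lemma sg_cell_increment:
  assumes "{i, j, k} = {0, 1, 2::nat}"
  shows "f (sg_Fw p w (p j)) - f (sg_Fw p w (p i)) =
     (3/5) ^ length w * (sg_normal_deriv p f w j - sg_normal_deriv p f w i) / 3"
proof -
  have jik: "{j, i, k} = {0, 1, 2::nat}" using assms by (simp add: insert_commute)
  have "(3/5::real) ^ length w * (5/3) ^ length w = 1"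
    by (simp flip: power_mult_distrib)
  then show ?thesis
    unfolding sg_normal_deriv_perm[OF assms] sg_normal_deriv_perm[OF jik]
    by (simp add: field_simps)
qed

lemma sg_normal_deriv_append_replicate_same:
  assumes "sg_harmonic p f" "sg_word w" "{i, j, k} = {0, 1, 2::nat}"
  shows "sg_normal_deriv p f (w @ replicate n i) i = sg_normal_deriv p f w i"
proof (induction n)
  case (Suc n)
  have "sg_word (w @ replicate n i)"
    using assms(2) perm012_distinct[OF assms(3)] by (auto simp: sg_word_def)
  moreover have "w @ replicate (Suc n) i = (w @ replicate n i) @ [i]"
    by (simp add: replicate_append_same[symmetric])
  ultimately show ?case
    using sg_normal_deriv_snoc_same[OF assms(1) _ assms(3)] Suc by metis
qed simp

lemma sg_normal_deriv_append_replicate_other: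
  assumes "sg_harmonic p f" "sg_word w" "{i, j, k} = {0, 1, 2::nat}"
  shows "sg_normal_deriv p f (w @ replicate n i) j =
    - sg_normal_deriv p f w i / 2 + (sg_normal_deriv p f w j + sg_normal_deriv p f w i / 2) / 3 ^ n"
proof (induction n)
  case (Suc n)
  have "sg_word (w @ replicate n i)"
    using assms(2) perm012_distinct[OF assms(3)] by (auto simp: sg_word_def)
  moreover have "w @ replicate (Suc n) i = (w @ replicate n i) @ [i]"
    by (simp add: replicate_append_same[symmetric])
  ultimately have "sg_normal_deriv p f (w @ replicate (Suc n) i) j =
      (sg_normal_deriv p f (w @ replicate n i) j - sg_normal_deriv p f w i) / 3"
    using sg_normal_deriv_snoc_other[OF assms(1) _ assms(3)]
      sg_normal_deriv_append_replicate_same[OF assms, of n] by metis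
  then show ?case unfolding Suc by (simp add: field_simps)
qed simp

lemma sg_harmonic_uminus: "sg_harmonic p f \<Longrightarrow> sg_harmonic p (\<lambda>x. - f x)"
  unfolding sg_harmonic_def by (auto intro: continuous_on_minus)

lemma sg_normal_deriv_uminus: "sg_normal_deriv p (\<lambda>x. - f x) w i = - sg_normal_deriv p f w i"
  unfolding sg_normal_deriv_def by (simp add: sum_negf algebra_simps)

lemma sg_edge_monotone_uminus: "sg_edge_monotone p (\<lambda>x. - f x) i j \<longleftrightarrow> sg_edge_monotone p f i j"
  unfolding sg_edge_monotone_def monotone_on_def by auto

lemma sg_harmonic_boundary_constant:
  assumes h: "sg_harmonic p f" and c: "f (p 1) = f (p 0)" "f (p 2) = f (p 0)"
  shows "\<forall>x\<in>sg_K p. f x = f (p 0)"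
proof -
  have "f (sg_Fw p w (p l)) = f (p 0)" if "sg_word w" "l < 3" for w l
    using that
  proof (induction w arbitrary: l rule: rev_induct)
    case Nil
    then show ?case using c by (auto simp: less_Suc_eq eval_nat_numeral)
  next
    case (snoc m w)
    then have w: "sg_word w" "m < 3" by (auto simp: sg_word_def)
    show ?case
    proof (cases "l = m")
      case True
      then show ?thesis using snoc.IH[OF w(1) snoc.prems(2)] by (simp add: sg_Fw_snoc)
    next
      case False
      then have mlk: "{m, l, 3 - m - l} = {0, 1, 2::nat}"
        using perm012_third[OF w(2) snoc.prems(2)] by simp
      then have "3 - m - l < 3" using perm012_distinct[OF mlk] by simp
      then show ?thesis
        using sg_harmonic_midpoint_rule[OF h w(1) mlk] snoc.IH[OF w(1)] w snoc.prems(2) by simp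
    qed
  qed
  then have "f x = f (p 0)" if "x \<in> sg_junctions p" for x
    using that unfolding sg_junctions_def by blast
  moreover have "continuous_on (closure (sg_junctions p)) f"
    using h unfolding sg_harmonic_def sg_K_def by blast
  ultimately show ?thesis
    unfolding sg_K_def using continuous_constant_on_closure by blast
qed

lemma sg_normal_deriv_boundary_sum:
  "sg_normal_deriv p f [] 0 + sg_normal_deriv p f [] 1 + sg_normal_deriv p f [] 2 = 0"
proof -
  have "{1, 0, 2} = {0, 1, 2::nat}" "{2, 0, 1} = {0, 1, 2::nat}" by auto
  then show ?thesis
    using sg_normal_deriv_perm[of 0 1 2 p f "[]"] sg_normal_deriv_perm[of 1 0 2 p f "[]"]
      sg_normal_deriv_perm[of 2 0 1 p f "[]"] by simp
qed

lemma sg_normal_deriv_boundary_pair_nonzero: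
  assumes h: "sg_harmonic p f" and nonconst: "\<not> (\<exists>c. \<forall>x\<in>sg_K p. f x = c)"
    and ijk: "{i, j, k} = {0, 1, 2}"
  shows "(sg_normal_deriv p f [] i, sg_normal_deriv p f [] j) \<noteq> (0, 0)"
proof
  assume "(sg_normal_deriv p f [] i, sg_normal_deriv p f [] j) = (0, 0)"
  moreover have "{j, i, k} = {0, 1, 2::nat}" using ijk by (simp add: insert_commute)
  ultimately have "f (p j) = f (p i)" "f (p k) = f (p i)"
    using sg_normal_deriv_perm[OF ijk, of p f "[]"] sg_normal_deriv_perm[of j i k p f "[]"] by simp_all
  moreover have "m = i \<or> m = j \<or> m = k" if "m < 3" for m
  proof -
    have "m \<in> {i, j, k}" using that unfolding ijk by auto
    then show ?thesis by simp
  qed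
  ultimately have fi: "f (p m) = f (p i)" if "m < 3" for m
    using that by fastforce
  have "f (p 1) = f (p 0)" "f (p 2) = f (p 0)"
    using fi[of 0] fi[of 1] fi[of 2] by simp_all
  then show False
    using sg_harmonic_boundary_constant[OF h] nonconst by blast
qed

section \<open>Normal derivatives along an edge\<close>

lemma sg_word_append_edge:
  assumes "sg_word w" "{i, j, k} = {0, 1, 2}" "set v \<subseteq> {i, j}"
  shows "sg_word (w @ v)"
proof -
  have "i < 3" "j < 3" using perm012_distinct[OF assms(2)] by auto
  then show ?thesis using assms(1,3) by (auto simp: sg_word_def)
qed

lemma sg_normal_deriv_snoc_edge:
  assumes h: "sg_harmonic p f" and ijk: "{i, j, k} = {0, 1, 2}" and w: "sg_word w"
  shows "sg_normal_deriv p f (w @ [i]) i = sg_normal_deriv p f w i"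
    "sg_normal_deriv p f (w @ [i]) j = (sg_normal_deriv p f w j - sg_normal_deriv p f w i) / 3"
    "sg_normal_deriv p f (w @ [j]) i = (sg_normal_deriv p f w i - sg_normal_deriv p f w j) / 3"
    "sg_normal_deriv p f (w @ [j]) j = sg_normal_deriv p f w j"
proof -
  have jik: "{j, i, k} = {0, 1, 2::nat}" using ijk by (simp add: insert_commute)
  show "sg_normal_deriv p f (w @ [i]) i = sg_normal_deriv p f w i"
    "sg_normal_deriv p f (w @ [i]) j = (sg_normal_deriv p f w j - sg_normal_deriv p f w i) / 3"
    using sg_normal_deriv_snoc_same[OF h w ijk] sg_normal_deriv_snoc_other[OF h w ijk] by auto
  show "sg_normal_deriv p f (w @ [j]) i = (sg_normal_deriv p f w i - sg_normal_deriv p f w j) / 3"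
    "sg_normal_deriv p f (w @ [j]) j = sg_normal_deriv p f w j"
    using sg_normal_deriv_snoc_same[OF h w jik] sg_normal_deriv_snoc_other[OF h w jik] by auto
qed

lemma sg_normal_deriv_opposite_signs_append:
  assumes h: "sg_harmonic p f" and ijk: "{i, j, k} = {0, 1, 2}" and w: "sg_word w"
    and v: "set v \<subseteq> {i, j}"
    and signs: "sg_normal_deriv p f w i \<le> 0" "0 \<le> sg_normal_deriv p f w j"
      "sg_normal_deriv p f w i < sg_normal_deriv p f w j"
  shows "sg_normal_deriv p f (w @ v) i \<le> 0 \<and> 0 \<le> sg_normal_deriv p f (w @ v) j \<and>
    sg_normal_deriv p f (w @ v) i < sg_normal_deriv p f (w @ v) j"
  using v
proof (induction v rule: rev_induct)
  case (snoc m v)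
  have "sg_word (w @ v)" and "m = i \<or> m = j"
    using sg_word_append_edge[OF w ijk] snoc.prems by auto
  then show ?case
    using sg_normal_deriv_snoc_edge[OF h ijk, of "w @ v"] snoc by auto
qed (use signs in simp)

lemma sg_balanced_imp_same_sign:
  assumes h: "sg_harmonic p f" and ijk: "{i, j, k} = {0, 1, 2}" and w: "sg_word w"
    and nz: "(sg_normal_deriv p f w i, sg_normal_deriv p f w j) \<noteq> (0, 0)"
    and v: "set v \<subseteq> {i, j}" "sg_normal_deriv p f (w @ v) i = sg_normal_deriv p f (w @ v) j"
  shows "sg_normal_deriv p f w i * sg_normal_deriv p f w j > 0"
proof (rule ccontr)
  assume "\<not> ?thesis"
  then have "sg_normal_deriv p f w i * sg_normal_deriv p f w j \<le> 0" by simp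
  then consider
      "sg_normal_deriv p f w i \<le> 0" "0 \<le> sg_normal_deriv p f w j"
    | "sg_normal_deriv p f w j \<le> 0" "0 \<le> sg_normal_deriv p f w i"
    unfolding mult_le_0_iff by blast
  then show False
  proof cases
    case 1
    moreover have "sg_normal_deriv p f w i < sg_normal_deriv p f w j" using 1 nz by force
    ultimately show False
      using sg_normal_deriv_opposite_signs_append[OF h ijk w v(1)] v(2) by simp
  next
    case 2
    have jik: "{j, i, k} = {0, 1, 2::nat}" using ijk by (simp add: insert_commute)
    have "set v \<subseteq> {j, i}" using v(1) by blast
    moreover have "sg_normal_deriv p f w j < sg_normal_deriv p f w i" using 2 nz by force
    ultimately show False
      using 2 sg_normal_deriv_opposite_signs_append[OF h jik w, of v] v(2) by simp
  qed
qed

lemma sg_balanced_after_letter_same_sign: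
  assumes h: "sg_harmonic p f" and ijk: "{i, j, k} = {0, 1, 2}" and w: "sg_word w"
    and nz: "(sg_normal_deriv p f w i, sg_normal_deriv p f w j) \<noteq> (0, 0)"
    and u: "m \<in> {i, j}" "set u \<subseteq> {i, j}"
      "sg_normal_deriv p f (w @ m # u) i = sg_normal_deriv p f (w @ m # u) j"
  shows "sg_normal_deriv p f (w @ [m]) i * sg_normal_deriv p f (w @ [m]) j > 0"
proof (rule sg_balanced_imp_same_sign[OF h ijk _ _ u(2)])
  show "sg_word (w @ [m])" using sg_word_append_edge[OF w ijk] u(1) by simp
  show "(sg_normal_deriv p f (w @ [m]) i, sg_normal_deriv p f (w @ [m]) j) \<noteq> (0, 0)"
    using u(1) nz sg_normal_deriv_snoc_edge[OF h ijk w] by auto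
  show "sg_normal_deriv p f ((w @ [m]) @ u) i = sg_normal_deriv p f ((w @ [m]) @ u) j"
    using u(3) by simp
qed

lemma sg_normal_deriv_snoc_edge_products:
  assumes h: "sg_harmonic p f" and ijk: "{i, j, k} = {0, 1, 2}" and w: "sg_word w"
  shows "\<not> (sg_normal_deriv p f (w @ [i]) i * sg_normal_deriv p f (w @ [i]) j > 0 \<and>
    sg_normal_deriv p f (w @ [j]) i * sg_normal_deriv p f (w @ [j]) j > 0)"
proof -
  define a b where "a = sg_normal_deriv p f w i" and "b = sg_normal_deriv p f w j"
  have "a * ((b - a) / 3) + (a - b) / 3 * b = - ((a - b) * (a - b)) / 3"
    by (simp add: field_simps)
  then have "\<not> (a * ((b - a) / 3) > 0 \<and> (a - b) / 3 * b > 0)"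
    using zero_le_square[of "a - b"] by linarith
  then show ?thesis unfolding sg_normal_deriv_snoc_edge[OF h ijk w] a_def b_def .
qed

lemma sg_balanced_word_unique:
  assumes h: "sg_harmonic p f" and ijk: "{i, j, k} = {0, 1, 2}"
  shows "sg_word w \<Longrightarrow> (sg_normal_deriv p f w i, sg_normal_deriv p f w j) \<noteq> (0, 0) \<Longrightarrow>
    set v \<subseteq> {i, j} \<Longrightarrow> sg_normal_deriv p f (w @ v) i = sg_normal_deriv p f (w @ v) j \<Longrightarrow>
    set v' \<subseteq> {i, j} \<Longrightarrow> sg_normal_deriv p f (w @ v') i = sg_normal_deriv p f (w @ v') j \<Longrightarrow>
    v = v'"
proof (induction v arbitrary: w v')
  note after_letter = sg_balanced_after_letter_same_sign[OF h ijk]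
  note snoc = sg_normal_deriv_snoc_edge[OF h ijk]
  \<comment> \<open>from a balanced cell, either letter makes one of the two normal derivatives vanish\<close>
  have balanced_stops: False
    if "sg_word w" "(sg_normal_deriv p f w i, sg_normal_deriv p f w j) \<noteq> (0, 0)"
      "sg_normal_deriv p f w i = sg_normal_deriv p f w j" "m \<in> {i, j}" "set u \<subseteq> {i, j}"
      "sg_normal_deriv p f (w @ m # u) i = sg_normal_deriv p f (w @ m # u) j" for w m u
    using after_letter[OF that(1,2,4-6)] that(3,4) snoc[OF that(1)] by auto
  {
    case Nil
    then show ?case using balanced_stops by (cases v') auto
  next
    case (Cons m v)
    show ?case
    proof (cases v')
      case Nil
      then show ?thesis using balanced_stops Cons.prems by auto
    next
      case (Cons m' v'')
      have pos: "sg_normal_deriv p f (w @ [m]) i * sg_normal_deriv p f (w @ [m]) j > 0"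
        and pos': "sg_normal_deriv p f (w @ [m']) i * sg_normal_deriv p f (w @ [m']) j > 0"
        using after_letter Cons.prems \<open>v' = m' # v''\<close> by auto
      have "m = m'"
      proof (rule ccontr)
        assume "m \<noteq> m'"
        then have "{m, m'} = {i, j}" using Cons.prems(3,5) \<open>v' = m' # v''\<close> by auto
        then show False
          using pos pos' sg_normal_deriv_snoc_edge_products[OF h ijk Cons.prems(1)]
          by (auto simp: doubleton_eq_iff)
      qed
      moreover have "v = v''"
      proof (rule Cons.IH)
        show "sg_word (w @ [m])" using sg_word_append_edge[OF Cons.prems(1) ijk] Cons.prems(3) by simp
        show "(sg_normal_deriv p f (w @ [m]) i, sg_normal_deriv p f (w @ [m]) j) \<noteq> (0, 0)"
          using pos by auto
      qed (use Cons.prems \<open>v' = m' # v''\<close> \<open>m = m'\<close> in auto)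
      ultimately show ?thesis using \<open>v' = m' # v''\<close> by simp
    qed
  }
qed

section \<open>Monotonicity on the edges\<close>

definition dyadic_grid :: "nat \<Rightarrow> real set" where
  "dyadic_grid n = {t. 0 \<le> t \<and> t \<le> 1 \<and> (\<exists>k::int. t = of_int k / 2 ^ n)}"

lemma dyadic_grid_endpoints: "0 \<in> dyadic_grid n" "1 \<in> dyadic_grid n"
  unfolding dyadic_grid_def by (auto intro!: exI[of _ 0] exI[of _ "2 ^ n"])

lemma dyadic_grid_0: "dyadic_grid 0 = {0, 1}"
proof -
  have "t \<in> {0, 1}" if "0 \<le> t" "t \<le> 1" "t = of_int k" for t :: real and k
  proof -
    have "k = 0 \<or> k = 1" using that by auto
    then show ?thesis using that by auto
  qed
  then show ?thesis unfolding dyadic_grid_def by (auto intro: exI[of _ 0] exI[of _ 1])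
qed

lemma dyadic_grid_Suc_lower: "s \<in> dyadic_grid (Suc n) \<Longrightarrow> s \<le> 1/2 \<Longrightarrow> 2 * s \<in> dyadic_grid n"
  unfolding dyadic_grid_def by auto

lemma dyadic_grid_Suc_upper: "s \<in> dyadic_grid (Suc n) \<Longrightarrow> 1/2 \<le> s \<Longrightarrow> 2 * s - 1 \<in> dyadic_grid n"
proof -
  assume "s \<in> dyadic_grid (Suc n)" "1/2 \<le> s"
  then obtain k :: int where k: "s = of_int k / 2 ^ Suc n" "s \<le> 1"
    by (auto simp: dyadic_grid_def)
  have "2 * s - 1 = of_int (k - 2 ^ n) / 2 ^ n" unfolding k by (simp add: field_simps)
  moreover have "0 \<le> 2 * s - 1" "2 * s - 1 \<le> 1" using \<open>1/2 \<le> s\<close> k(2) by auto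
  ultimately show ?thesis unfolding dyadic_grid_def by blast
qed

definition dyadic_floor :: "real \<Rightarrow> nat \<Rightarrow> real" where
  "dyadic_floor t n = of_int \<lfloor>t * 2 ^ n\<rfloor> / 2 ^ n"

lemma dyadic_floor_in_grid: "0 \<le> t \<Longrightarrow> t \<le> 1 \<Longrightarrow> dyadic_floor t n \<in> dyadic_grid n"
proof -
  assume t: "0 \<le> t" "t \<le> 1"
  have "\<lfloor>t * 2 ^ n\<rfloor> \<le> \<lfloor>(2::real) ^ n\<rfloor>" using t by (intro floor_mono) simp
  then have "of_int \<lfloor>t * 2 ^ n\<rfloor> \<le> (2::real) ^ n"
    by (metis floor_of_nat of_int_of_nat_eq of_int_le_iff of_nat_numeral of_nat_power)
  moreover have "0 \<le> \<lfloor>t * 2 ^ n\<rfloor>" using t by simp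
  ultimately show ?thesis unfolding dyadic_grid_def dyadic_floor_def by auto
qed

lemma dyadic_floor_mono: "s \<le> t \<Longrightarrow> dyadic_floor s n \<le> dyadic_floor t n"
  unfolding dyadic_floor_def by (intro divide_right_mono) (auto intro: floor_mono)

lemma dyadic_floor_tendsto: "(\<lambda>n. dyadic_floor t n) \<longlonglongrightarrow> t"
proof (rule tendsto_sandwich[of "\<lambda>n. t - 1 / 2 ^ n" _ _ "\<lambda>n. t"])
  have "t - 1 / 2 ^ n \<le> dyadic_floor t n" for n
  proof -
    have "t - 1 / 2 ^ n = (t * 2 ^ n - 1) / 2 ^ n" by (simp add: field_simps)
    also have "\<dots> \<le> dyadic_floor t n"
      unfolding dyadic_floor_def by (rule divide_right_mono) (linarith, simp)
    finally show ?thesis .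
  qed
  then show "\<forall>\<^sub>F n in sequentially. t - 1 / 2 ^ n \<le> dyadic_floor t n" by simp
  have "dyadic_floor t n \<le> t" for n
    using of_int_floor_le[of "t * 2 ^ n"] unfolding dyadic_floor_def by (simp add: field_simps)
  then show "\<forall>\<^sub>F n in sequentially. dyadic_floor t n \<le> t" by simp
  show "(\<lambda>n. t - 1 / 2 ^ n) \<longlonglongrightarrow> t"
    using tendsto_diff[OF tendsto_const LIMSEQ_divide_realpow_zero[of 2 1]] by simp
qed simp

lemma sg_edge_dyadic_in_junctions:
  assumes "i < 3" "j < 3"
  shows "sg_word w \<Longrightarrow> t \<in> dyadic_grid n \<Longrightarrow>
    sg_Fw p w (p i + of_real t * (p j - p i)) \<in> sg_junctions p"
proof (induction n arbitrary: w t)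
  case 0
  then have "t = 0 \<or> t = 1" by (auto simp: dyadic_grid_0)
  then show ?case using sg_Fw_vertex_in_junctions[OF 0(1)] assms by auto
next
  case (Suc n)
  have w: "sg_word (w @ [i])" "sg_word (w @ [j])" using Suc.prems(1) assms by (auto simp: sg_word_def)
  show ?case
  proof (cases "t \<le> 1/2")
    case True
    then show ?thesis
      using Suc.IH[OF w(1) dyadic_grid_Suc_lower[OF Suc.prems(2)]] by (simp only: sg_Fw_snoc_edge_lower)
  next
    case False
    then show ?thesis
      using Suc.IH[OF w(2) dyadic_grid_Suc_upper[OF Suc.prems(2)]] by (simp only: sg_Fw_snoc_edge_upper)
  qed
qed

lemma sg_edge_mono_on_dyadic_grid:
  fixes f :: "complex \<Rightarrow> real"
  assumes cells: "\<And>w. set w \<subseteq> {i, j} \<Longrightarrow> f (sg_Fw p w (p i)) \<le> f (sg_Fw p w (p j))"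
  shows "set w \<subseteq> {i, j} \<Longrightarrow> s \<in> dyadic_grid n \<Longrightarrow> t \<in> dyadic_grid n \<Longrightarrow> s \<le> t \<Longrightarrow>
    f (sg_Fw p w (p i + of_real s * (p j - p i))) \<le> f (sg_Fw p w (p i + of_real t * (p j - p i)))"
proof (induction n arbitrary: w s t)
  case 0
  then have "s \<in> {0, 1}" "t \<in> {0, 1}" by (auto simp: dyadic_grid_0)
  then show ?case using cells[OF 0(1)] 0(4) by auto
next
  case (Suc n)
  let ?g = "\<lambda>w t. f (sg_Fw p w (p i + of_real t * (p j - p i)))"
  have wi: "set (w @ [i]) \<subseteq> {i, j}" and wj: "set (w @ [j]) \<subseteq> {i, j}"
    using Suc.prems(1) by auto
  have lower: "?g w s = ?g (w @ [i]) (2 * s)" for s by (simp only: sg_Fw_snoc_edge_lower)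
  have upper: "?g w s = ?g (w @ [j]) (2 * s - 1)" for s by (simp only: sg_Fw_snoc_edge_upper)
  consider "t \<le> 1/2" | "1/2 \<le> s" | "s < 1/2" "1/2 < t" by linarith
  then show ?case
  proof cases
    case 1
    then have "s \<le> 1/2" using Suc.prems(4) by linarith
    then show ?thesis
      unfolding lower[of s] lower[of t]
      using Suc.IH[OF wi dyadic_grid_Suc_lower[OF Suc.prems(2)] dyadic_grid_Suc_lower[OF Suc.prems(3) 1]]
        Suc.prems(4) by simp
  next
    case 2
    then have "1/2 \<le> t" using Suc.prems(4) by linarith
    then show ?thesis
      unfolding upper[of s] upper[of t]
      using Suc.IH[OF wj dyadic_grid_Suc_upper[OF Suc.prems(2) 2] dyadic_grid_Suc_upper[OF Suc.prems(3)]]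
        Suc.prems(4) by simp
  next
    case 3
    have "?g w s \<le> ?g w (1/2)"
      unfolding lower[of s] lower[of "1/2"]
      using Suc.IH[OF wi dyadic_grid_Suc_lower[OF Suc.prems(2)] dyadic_grid_endpoints(2)] 3 by simp
    also have "\<dots> \<le> ?g w t"
      unfolding upper[of t] upper[of "1/2"]
      using Suc.IH[OF wj dyadic_grid_endpoints(1) dyadic_grid_Suc_upper[OF Suc.prems(3)]] 3 by simp
    finally show ?thesis .
  qed
qed

lemma sg_edge_subset_K:
  assumes "i < 3" "j < 3" "0 \<le> t" "t \<le> 1"
  shows "p i + of_real t * (p j - p i) \<in> sg_K p"
proof -
  let ?x = "\<lambda>n. p i + of_real (dyadic_floor t n) * (p j - p i)"
  have "?x n \<in> sg_junctions p" for n
    using sg_edge_dyadic_in_junctions[OF assms(1,2), of "[]" "dyadic_floor t n" n p]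
      dyadic_floor_in_grid[OF assms(3,4)] by (simp add: sg_word_def)
  moreover have "?x \<longlonglongrightarrow> p i + of_real t * (p j - p i)"
    by (intro tendsto_intros dyadic_floor_tendsto)
  ultimately show ?thesis
    unfolding sg_K_def closure_sequential by (intro exI[of _ ?x]) auto
qed

lemma sg_edge_increasing_if_cells_increasing:
  fixes f :: "complex \<Rightarrow> real"
  assumes f: "continuous_on (sg_K p) f" and ij: "i < 3" "j < 3"
    and cells: "\<And>w. set w \<subseteq> {i, j} \<Longrightarrow> f (sg_Fw p w (p i)) \<le> f (sg_Fw p w (p j))"
  shows "monotone_on {0..1} (\<le>) (\<le>) (\<lambda>t. f (p i + of_real t * (p j - p i)))"
proof (rule monotone_onI)
  fix s t :: real
  assume st: "s \<in> {0..1}" "t \<in> {0..1}" "s \<le> t"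
  let ?g = "\<lambda>t. f (p i + of_real t * (p j - p i))"
  have "continuous_on {0..1} ?g"
    using sg_edge_subset_K[OF ij] by (intro continuous_on_compose2[OF f]) (auto intro!: continuous_intros)
  moreover have "dyadic_floor u n \<in> {0..1}" if "u \<in> {0..1}" for u n
    using dyadic_floor_in_grid[of u n] that unfolding dyadic_grid_def by auto
  ultimately have lim: "(\<lambda>n. ?g (dyadic_floor u n)) \<longlonglongrightarrow> ?g u" if "u \<in> {0..1}" for u
    using that by (intro continuous_on_tendsto_compose[OF _ dyadic_floor_tendsto]) auto
  have "?g (dyadic_floor s n) \<le> ?g (dyadic_floor t n)" for n
    using sg_edge_mono_on_dyadic_grid[OF cells, of "[]" "dyadic_floor s n" n "dyadic_floor t n"]
      dyadic_floor_in_grid st dyadic_floor_mono[OF st(3)] by auto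
  then show "?g s \<le> ?g t" by (intro LIMSEQ_le[OF lim[OF st(1)] lim[OF st(2)]]) auto
qed

lemma sg_edge_increasing_if_opposite_signs:
  assumes h: "sg_harmonic p f" and ijk: "{i, j, k} = {0, 1, 2}"
    and signs: "sg_normal_deriv p f [] i \<le> 0" "0 \<le> sg_normal_deriv p f [] j"
      "sg_normal_deriv p f [] i < sg_normal_deriv p f [] j"
  shows "monotone_on {0..1} (\<le>) (\<le>) (\<lambda>t. f (p i + of_real t * (p j - p i)))"
proof (rule sg_edge_increasing_if_cells_increasing)
  show "continuous_on (sg_K p) f" using h unfolding sg_harmonic_def by blast
  show "i < 3" "j < 3" using perm012_distinct[OF ijk] by auto
  fix w
  assume "set w \<subseteq> {i, j}"
  then have "sg_normal_deriv p f w i < sg_normal_deriv p f w j"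
    using sg_normal_deriv_opposite_signs_append[OF h ijk _ _ signs] by (simp add: sg_word_def)
  then have "(3/5) ^ length w * (sg_normal_deriv p f w j - sg_normal_deriv p f w i) / 3 > 0"
    by simp
  then show "f (sg_Fw p w (p i)) \<le> f (sg_Fw p w (p j))"
    using sg_cell_increment[OF ijk, of f p w] by linarith
qed

lemma sg_edge_not_monotone_if_positive:
  assumes h: "sg_harmonic p f" and ijk: "{i, j, k} = {0, 1, 2}"
    and pos: "sg_normal_deriv p f [] i > 0" "sg_normal_deriv p f [] j > 0"
  shows "\<not> sg_edge_monotone p f i j"
proof -
  define a b where "a = sg_normal_deriv p f [] i" and "b = sg_normal_deriv p f [] j"
  define g where "g t = f (p i + of_real t * (p j - p i))" for t :: real
  have jik: "{j, i, k} = {0, 1, 2::nat}" using ijk by (simp add: insert_commute)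
  have w0: "sg_word []" by (simp add: sg_word_def)
  have "\<forall>\<^sub>F m in sequentially. (b + a/2) / 3 ^ m < 3 * a / 2 \<and> (a + b/2) / 3 ^ m < 3 * b / 2"
    using pos unfolding a_def[symmetric] b_def[symmetric]
    by (intro eventually_conj order_tendstoD(2)[OF LIMSEQ_divide_realpow_zero]) auto
  then obtain m where m: "(b + a/2) / 3 ^ m < 3 * a / 2" "(a + b/2) / 3 ^ m < 3 * b / 2"
    unfolding eventually_sequentially by auto
  have Fi: "sg_Fw p (replicate m i) (p j) = p i + of_real (1 / 2 ^ m) * (p j - p i)"
    by (simp add: sg_Fw_replicate)
  have Fj: "sg_Fw p (replicate m j) (p i) = p i + of_real (1 - 1 / 2 ^ m) * (p j - p i)"
    by (simp add: sg_Fw_replicate algebra_simps diff_divide_distrib)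
  have "g (1 / 2 ^ m) - g 0 = (3/5) ^ m * ((- a/2 + (b + a/2) / 3 ^ m) - a) / 3"
    using sg_cell_increment[OF ijk, of f p "replicate m i"]
      sg_normal_deriv_append_replicate_same[OF h w0 ijk, of m]
      sg_normal_deriv_append_replicate_other[OF h w0 ijk, of m]
    unfolding g_def a_def b_def Fi by simp
  also have "\<dots> < 0"
    using m(1) by (intro divide_neg_pos mult_pos_neg) auto
  finally have "g (1 / 2 ^ m) < g 0" by simp
  have "g 1 - g (1 - 1 / 2 ^ m) = (3/5) ^ m * (b - (- b/2 + (a + b/2) / 3 ^ m)) / 3"
    using sg_cell_increment[OF ijk, of f p "replicate m j"]
      sg_normal_deriv_append_replicate_same[OF h w0 jik, of m]
      sg_normal_deriv_append_replicate_other[OF h w0 jik, of m]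
    unfolding g_def a_def b_def Fj by simp
  also have "\<dots> > 0"
    using m(2) by (intro divide_pos_pos mult_pos_pos) auto
  finally have "g (1 - 1 / 2 ^ m) < g 1" by simp
  have "0 \<le> 1 / (2::real) ^ m" "1 / (2::real) ^ m \<le> 1" by auto
  then show ?thesis
    unfolding sg_edge_monotone_def Let_def g_def[symmetric] monotone_on_def
    using \<open>g (1 / 2 ^ m) < g 0\<close> \<open>g (1 - 1 / 2 ^ m) < g 1\<close>
    by (smt (verit) atLeastAtMost_iff)
qed

lemma sg_edge_monotone_if_opposite_signs:
  assumes h: "sg_harmonic p f" and ijk: "{i, j, k} = {0, 1, 2}"
    and nz: "(sg_normal_deriv p f [] i, sg_normal_deriv p f [] j) \<noteq> (0, 0)"
    and "sg_normal_deriv p f [] i * sg_normal_deriv p f [] j \<le> 0"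
  shows "sg_edge_monotone p f i j"
proof -
  consider
      "sg_normal_deriv p f [] i \<le> 0" "0 \<le> sg_normal_deriv p f [] j"
    | "sg_normal_deriv p f [] j \<le> 0" "0 \<le> sg_normal_deriv p f [] i"
    using assms(4) unfolding mult_le_0_iff by blast
  then show ?thesis
  proof cases
    case 1
    then have "sg_normal_deriv p f [] i < sg_normal_deriv p f [] j" using nz by force
    then show ?thesis
      using sg_edge_increasing_if_opposite_signs[OF h ijk 1] unfolding sg_edge_monotone_def by simp
  next
    case 2
    then have "sg_normal_deriv p f [] j < sg_normal_deriv p f [] i" using nz by force
    then have "monotone_on {0..1} (\<le>) (\<le>) (\<lambda>t. - f (p i + of_real t * (p j - p i)))"
      using 2 sg_edge_increasing_if_opposite_signs[OF sg_harmonic_uminus[OF h] ijk]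
      by (simp add: sg_normal_deriv_uminus)
    then show ?thesis
      unfolding sg_edge_monotone_def monotone_on_def by auto
  qed
qed

lemma sg_edge_not_monotone_if_same_sign:
  assumes h: "sg_harmonic p f" and ijk: "{i, j, k} = {0, 1, 2}"
    and "sg_normal_deriv p f [] i * sg_normal_deriv p f [] j > 0"
  shows "\<not> sg_edge_monotone p f i j"
proof -
  consider "sg_normal_deriv p f [] i > 0" "sg_normal_deriv p f [] j > 0"
    | "sg_normal_deriv p f [] i < 0" "sg_normal_deriv p f [] j < 0"
    using assms(3) unfolding zero_less_mult_iff by blast
  then show ?thesis
  proof cases
    case 1
    then show ?thesis using sg_edge_not_monotone_if_positive[OF h ijk] by blast
  next
    case 2
    then show ?thesis
      using sg_edge_not_monotone_if_positive[OF sg_harmonic_uminus[OF h] ijk]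
      by (simp add: sg_normal_deriv_uminus sg_edge_monotone_uminus)
  qed
qed

lemma sg_edge_monotone_iff:
  assumes h: "sg_harmonic p f" and ijk: "{i, j, k} = {0, 1, 2}"
    and nz: "(sg_normal_deriv p f [] i, sg_normal_deriv p f [] j) \<noteq> (0, 0)"
  shows "sg_edge_monotone p f i j \<longleftrightarrow> sg_normal_deriv p f [] i * sg_normal_deriv p f [] j \<le> 0"
  using sg_edge_monotone_if_opposite_signs[OF h ijk nz] sg_edge_not_monotone_if_same_sign[OF h ijk]
  by force

section \<open>Zeros of the normal derivative on the contour\<close>

lemma sg_zero_nd_vertex_iff:
  assumes nc: "\<not> collinear {p 0, p 1, p 2}" and h: "sg_harmonic p f" and m: "m < 3"
  shows "p m \<in> sg_zero_nd_points p f \<longleftrightarrow> sg_normal_deriv p f [] m = 0"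
proof
  assume "p m \<in> sg_zero_nd_points p f"
  then obtain w l where w: "sg_word w" "l < 3" "sg_Fw p w (p l) = p m" "sg_normal_deriv p f w l = 0"
    unfolding sg_zero_nd_points_def by blast
  have "set w \<subseteq> {m}" "l = m" using sg_Fw_eq_vertex[OF nc w(1,2) m w(3)] by auto
  then have "w = [] @ replicate (length w) m" using replicate_length_same[of w m] by force
  moreover obtain j k where "{m, j, k} = {0, 1, 2::nat}"
    using m by (rule perm012_exists)
  ultimately have "sg_normal_deriv p f w m = sg_normal_deriv p f [] m"
    by (metis sg_normal_deriv_append_replicate_same[OF h] sg_word_def empty_set empty_subsetI)
  then show "sg_normal_deriv p f [] m = 0" using w(4) \<open>l = m\<close> by simp
next
  assume "sg_normal_deriv p f [] m = 0"
  moreover have "p m \<in> sg_junctions p" "sg_word []"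
    using sg_Fw_vertex_in_junctions[of "[]" m p] m by (simp_all add: sg_word_def)
  moreover have "p m \<in> sg_contour p"
    using m unfolding sg_contour_def by (auto simp: less_Suc_eq eval_nat_numeral)
  ultimately show "p m \<in> sg_zero_nd_points p f"
    unfolding sg_zero_nd_points_def using m by fastforce
qed

lemma sg_zero_nd_on_edge:
  assumes nc: "\<not> collinear {p 0, p 1, p 2}" and h: "sg_harmonic p f" and ijk: "{i, j, k} = {0, 1, 2}"
    and x: "x \<in> sg_zero_nd_points p f" "x \<in> closed_segment (p i) (p j)" "x \<noteq> p i" "x \<noteq> p j"
  shows "\<exists>v. set v \<subseteq> {i, j} \<and> x = sg_Fw p v (midpoint (p i) (p j)) \<and>
    sg_normal_deriv p f v i = sg_normal_deriv p f v j"
proof -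
  obtain w l where w: "sg_word w" "l < 3" "sg_Fw p w (p l) = x" "sg_normal_deriv p f w l = 0"
    using x(1) unfolding sg_zero_nd_points_def by blast
  have wl: "set w \<subseteq> {i, j}" "l \<in> {i, j}" using sg_Fw_on_edge[OF nc ijk w(1,2)] w(3) x(2) by auto
  define l' where "l' = (if l = i then j else i)"
  have ll': "{l, l'} = {i, j}" using wl(2) unfolding l'_def by auto
  have perm: "{l, l', k} = {0, 1, 2::nat}" "{l', l, k} = {0, 1, 2::nat}"
    using ijk ll' by (simp_all only: insert_commute)
  have "l \<noteq> l'" using perm012_distinct[OF perm(1)] by simp
  have "w \<noteq> replicate n l" for n
    using w(3) wl(2) x(3,4) by auto
  then obtain v m n where "m \<noteq> l" "w = v @ [m] @ replicate n l"
    using replicate_or_last_other[of w l] by blast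
  moreover have "m \<in> {l, l'}" using calculation(2) wl(1) ll' by auto
  ultimately have v: "w = v @ [l'] @ replicate n l" by auto
  have "sg_word v" "sg_word (v @ [l'])" using w(1) v by (auto simp: sg_word_def)
  then have "sg_normal_deriv p f w l = (sg_normal_deriv p f v l - sg_normal_deriv p f v l') / 3"
    unfolding v using sg_normal_deriv_append_replicate_same[OF h _ perm(1)]
      sg_normal_deriv_snoc_other[OF h _ perm(2)] by (metis append_assoc)
  then have "sg_normal_deriv p f v i = sg_normal_deriv p f v j"
    using w(4) ll' by (auto simp: doubleton_eq_iff)
  moreover have "x = sg_Fw p v (midpoint (p i) (p j))"
    using w(3) ll' unfolding v by (auto simp: sg_Fw_append sg_F_vertex doubleton_eq_iff midpoint_sym)
  moreover have "set v \<subseteq> {i, j}" using wl(1) v by simp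
  ultimately show ?thesis by blast
qed

(* (i, j, k) stands for the edge [p i, p j] of G_0 and its opposite vertex p k *)
definition sg_edges :: "(nat \<times> nat \<times> nat) set" where
  "sg_edges = {(0, 1, 2), (0, 2, 1), (1, 2, 0)}"

lemma sg_edges_perm: "(i, j, k) \<in> sg_edges \<Longrightarrow> {i, j, k} = {0, 1, 2}"
  unfolding sg_edges_def by auto

lemma sum3_zero_unique_pos_edge:
  fixes d :: "nat \<Rightarrow> real"
  assumes sum: "d 0 + d 1 + d 2 = 0"
    and "(i, j, k) \<in> sg_edges" "(i', j', k') \<in> sg_edges" "d i * d j > 0" "d i' * d j' > 0"
  shows "(i, j) = (i', j')"
proof -
  have "d 0 * d 1 > 0 \<Longrightarrow> d 0 * d 2 < 0 \<and> d 1 * d 2 < 0"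
    "d 0 * d 2 > 0 \<Longrightarrow> d 0 * d 1 < 0 \<and> d 2 * d 1 < 0"
    "d 1 * d 2 > 0 \<Longrightarrow> d 1 * d 0 < 0 \<and> d 2 * d 0 < 0"
    using sum sum3_zero_pos_product[of "d 0" "d 1" "d 2"] sum3_zero_pos_product[of "d 0" "d 2" "d 1"]
      sum3_zero_pos_product[of "d 1" "d 2" "d 0"] by (simp_all add: algebra_simps)
  then show ?thesis using assms(2-) unfolding sg_edges_def by (auto simp: mult.commute)
qed

lemma sg_zero_nd_points_cases:
  assumes nc: "\<not> collinear {p 0, p 1, p 2}" and h: "sg_harmonic p f"
    and x: "x \<in> sg_zero_nd_points p f"
  shows "(\<exists>m<3. x = p m \<and> sg_normal_deriv p f [] m = 0) \<or>
    (\<exists>i j k v. (i, j, k) \<in> sg_edges \<and> set v \<subseteq> {i, j} \<and>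
      x = sg_Fw p v (midpoint (p i) (p j)) \<and> sg_normal_deriv p f v i = sg_normal_deriv p f v j)"
proof (cases "x \<in> {p 0, p 1, p 2}")
  case True
  then have "\<exists>m\<in>{0, 1, 2::nat}. x = p m" by simp
  then obtain m where m: "m \<in> {0, 1, 2::nat}" "x = p m" by blast
  then have "m < 3" by auto
  moreover have "sg_normal_deriv p f [] m = 0"
    using sg_zero_nd_vertex_iff[OF nc h \<open>m < 3\<close>] x m(2) by simp
  ultimately show ?thesis using m(2) by blast
next
  case False
  have "x \<in> sg_contour p" using x unfolding sg_zero_nd_points_def by simp
  then obtain i j k where ijk: "(i, j, k) \<in> sg_edges" and seg: "x \<in> closed_segment (p i) (p j)"
    unfolding sg_contour_def sg_edges_def by (elim UnE) auto
  have "x \<noteq> p i" "x \<noteq> p j" using False ijk by (auto simp: sg_edges_def)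
  then obtain v where "set v \<subseteq> {i, j}" "x = sg_Fw p v (midpoint (p i) (p j))"
    "sg_normal_deriv p f v i = sg_normal_deriv p f v j"
    using sg_zero_nd_on_edge[OF nc h sg_edges_perm[OF ijk] x seg] by blast
  then show ?thesis using ijk by blast
qed

lemma sg_zero_nd_points_subsingleton:
  assumes nc: "\<not> collinear {p 0, p 1, p 2}" and h: "sg_harmonic p f"
    and nonconst: "\<not> (\<exists>c. \<forall>x\<in>sg_K p. f x = c)"
    and x: "x \<in> sg_zero_nd_points p f" and y: "y \<in> sg_zero_nd_points p f"
  shows "x = y"
proof -
  define D where "D = sg_normal_deriv p f []"
  have sum: "D 0 + D 1 + D 2 = 0" unfolding D_def by (rule sg_normal_deriv_boundary_sum)
  have nz: "(D i, D j) \<noteq> (0, 0)" if "{i, j, k} = {0, 1, 2}" for i j k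
    using sg_normal_deriv_boundary_pair_nonzero[OF h nonconst that] unfolding D_def .
  have pos: "D i * D j > 0"
    if "(i, j, k) \<in> sg_edges" "set v \<subseteq> {i, j}" "sg_normal_deriv p f v i = sg_normal_deriv p f v j"
    for i j k v
    using sg_balanced_imp_same_sign[OF h sg_edges_perm[OF that(1)] _ _ that(2)] that(3)
      nz[OF sg_edges_perm[OF that(1)]] unfolding D_def by (simp add: sg_word_def)
  note cases = sg_zero_nd_points_cases[OF nc h, folded D_def]
  show ?thesis
  proof (cases "\<exists>m<3. D m = 0")
    case True
    then have "D 0 * D 1 \<le> 0 \<and> D 0 * D 2 \<le> 0 \<and> D 1 * D 2 \<le> 0"
      using sum3_zero_some_zero_iff[OF sum] by (auto simp: less_Suc_eq eval_nat_numeral)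
    then have "\<not> D i * D j > 0" if "(i, j, k) \<in> sg_edges" for i j k
      using that unfolding sg_edges_def by auto
    then obtain m m' where "m < 3" "x = p m" "D m = 0" "m' < 3" "y = p m'" "D m' = 0"
      using cases[OF x] cases[OF y] pos by metis
    moreover have "m = m'"
    proof (rule ccontr)
      assume "m \<noteq> m'"
      then have "{m, m', 3 - m - m'} = {0, 1, 2}" using perm012_third \<open>m < 3\<close> \<open>m' < 3\<close> by simp
      then show False using nz \<open>D m = 0\<close> \<open>D m' = 0\<close> by blast
    qed
    ultimately show ?thesis by simp
  next
    case False
    then obtain i j k v i' j' k' v' where
      x': "(i, j, k) \<in> sg_edges" "set v \<subseteq> {i, j}" "x = sg_Fw p v (midpoint (p i) (p j))"
        "sg_normal_deriv p f v i = sg_normal_deriv p f v j"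
      and y': "(i', j', k') \<in> sg_edges" "set v' \<subseteq> {i', j'}" "y = sg_Fw p v' (midpoint (p i') (p j'))"
        "sg_normal_deriv p f v' i' = sg_normal_deriv p f v' j'"
      using cases[OF x] cases[OF y] by blast
    have "(i', j') = (i, j)"
      using sum3_zero_unique_pos_edge[OF sum y'(1) x'(1) pos[OF y'(1,2,4)] pos[OF x'(1,2,4)]] .
    moreover have "v = v'"
      using sg_balanced_word_unique[OF h sg_edges_perm[OF x'(1)], of "[]" v v'] nz[OF sg_edges_perm[OF x'(1)]]
        x' y' calculation unfolding D_def by (simp add: sg_word_def)
    ultimately show ?thesis using x'(3) y'(3) by simp
  qed
qed

theorem theorem5:
  fixes p :: "nat \<Rightarrow> complex" and f :: "complex \<Rightarrow> real"
  assumes "dist (p 0) (p 1) = 1" and "dist (p 0) (p 2) = 1" and "dist (p 1) (p 2) = 1"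
    and "sg_harmonic p f"
    and "\<not> (\<exists>c. \<forall>x\<in>sg_K p. f x = c)"
  shows "(\<forall>x y. x \<in> sg_zero_nd_points p f \<and> y \<in> sg_zero_nd_points p f \<longrightarrow> x = y) \<and>
         ((\<exists>x\<in>sg_zero_nd_points p f. x \<in> {p 0, p 1, p 2}) \<longleftrightarrow>
            sg_edge_monotone p f 0 1 \<and> sg_edge_monotone p f 0 2 \<and> sg_edge_monotone p f 1 2)"
proof -
  note h = assms(4) and nonconst = assms(5)
  have nc: "\<not> collinear {p 0, p 1, p 2}"
    using assms(1-3) by (intro equilateral_not_collinear) auto
  define D where "D = sg_normal_deriv p f []"
  have perms: "{0, 1, 2} = {0, 1, 2::nat}" "{0, 2, 1} = {0, 1, 2::nat}" "{1, 2, 0} = {0, 1, 2::nat}"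
    by auto
  have mono_iff: "sg_edge_monotone p f i j \<longleftrightarrow> D i * D j \<le> 0" if "{i, j, k} = {0, 1, 2}" for i j k
    using sg_edge_monotone_iff[OF h that sg_normal_deriv_boundary_pair_nonzero[OF h nonconst that]]
    unfolding D_def .
  have "(\<exists>x\<in>sg_zero_nd_points p f. x \<in> {p 0, p 1, p 2}) \<longleftrightarrow> D 0 = 0 \<or> D 1 = 0 \<or> D 2 = 0"
    using sg_zero_nd_vertex_iff[OF nc h, of 0] sg_zero_nd_vertex_iff[OF nc h, of 1]
      sg_zero_nd_vertex_iff[OF nc h, of 2] unfolding D_def by auto
  also have "\<dots> \<longleftrightarrow> D 0 * D 1 \<le> 0 \<and> D 0 * D 2 \<le> 0 \<and> D 1 * D 2 \<le> 0"
    using sum3_zero_some_zero_iff sg_normal_deriv_boundary_sum unfolding D_def by blast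
  also have "\<dots> \<longleftrightarrow> sg_edge_monotone p f 0 1 \<and> sg_edge_monotone p f 0 2 \<and> sg_edge_monotone p f 1 2"
    using mono_iff[OF perms(1)] mono_iff[OF perms(2)] mono_iff[OF perms(3)] by simp
  finally show ?thesis
    using sg_zero_nd_points_subsingleton[OF nc h nonconst] by blast
qed

end
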